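(* Let $G$ be the $m\times n$ triangle lattice tube graph with $n\ge 4$ and $m\ge 3$. Then $T_1(G)=2$.
   Context: The $m\times n$ triangular lattice graph is $P_m\times P_n$ (Cartesian product of paths; vertices are integer points $(i,j)$, $1\le i\le n$, $1\le j\le m$) together with the diagonal edges joining $(i,j)$ and $(i+1,j+1)$. The $m\times n$ triangle lattice tube graph is obtained from it by identifying, in each of the $m$ rows, the first vertex $(1,j)$ with the last vertex $(n,j)$ (so the lattice wraps into a tube; equivalently its vertex set is $\mathbb{Z}_{n-1}\times\{1,\dots,m\}$ with edges $(i,j)(i+1,j)$, $(i,j)(i,j+1)$, $(i,j)(i+1,j+1)$). Fix a set $\Sigma$ of symbols (bond-edge types) and a disjoint copy $\hat\Sigma=\{\hat a:a\in\Sigma\}$ with $\hat{\hat a}=a$; elements of $\Sigma\cup\hat\Sigma$ are cohesive-end types. A tile is a finite multiset of cohesive-end types. A pot is a finite set $P$ of tiles such that whenever $x$ occurs in a tile of $P$, $\hat x$ occurs in some tile of $P$; $\#P$ is its number of tiles. Graphs are finite, loops and multiple edges allowed. An assembly design of a graph $H$ labels the half-edges of $H$ by cohesive-end types so that the two half-edges of each edge receive complementary labels $x,\hat x$; $t_v$ is the multiset of labels at $v$, $P_\lambda(H)=\{t_v\}$, and $P$ realizes $H$ ($H\in\mathcal{O}(P)$) if some assembly design $\lambda$ has $P_\lambda(H)\subseteq P$. $T_1(G)=\min\{\#P: G\in\mathcal{O}(P)\}$. *)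

theory Defs
  imports Main "HOL-Library.Multiset"
begin

text \<open>Cohesive-end types over a symbol type: a symbol a or its complement hat a.\<close>
datatype 's cend = Sym 's | Hat 's

fun hat :: "'s cend \<Rightarrow> 's cend" where
  "hat (Sym a) = Hat a"
| "hat (Hat a) = Sym a"

type_synonym 's tile = "'s cend multiset"

definition pot :: "'s tile set \<Rightarrow> bool" where
  "pot P \<longleftrightarrow> finite P \<and> (\<forall>t\<in>P. \<forall>x. x \<in># t \<longrightarrow> (\<exists>t'\<in>P. hat x \<in># t'))"

text \<open>A finite multigraph (loops and multiple edges allowed): vertex set V, edge set E,
and each edge e has ends (fst (ends e), snd (ends e)). Half-edges of e are (e,False) at
fst (ends e) and (e,True) at snd (ends e).\<close>
record ('v, 'e) mgraph =
  verts :: "'v set"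
  edges :: "'e set"
  ends :: "'e \<Rightarrow> 'v \<times> 'v"

definition hend :: "('v, 'e) mgraph \<Rightarrow> 'e \<times> bool \<Rightarrow> 'v" where
  "hend G h = (if snd h then snd (ends G (fst h)) else fst (ends G (fst h)))"

definition tile_at :: "('v, 'e) mgraph \<Rightarrow> ('e \<times> bool \<Rightarrow> 's cend) \<Rightarrow> 'v \<Rightarrow> 's tile" where
  "tile_at G lam v = image_mset lam (mset_set {h. fst h \<in> edges G \<and> hend G h = v})"

definition assembly_design :: "('v, 'e) mgraph \<Rightarrow> ('e \<times> bool \<Rightarrow> 's cend) \<Rightarrow> bool" where
  "assembly_design G lam \<longleftrightarrow> (\<forall>e\<in>edges G. lam (e, True) = hat (lam (e, False)))"

definition realizes :: "'s tile set \<Rightarrow> ('v, 'e) mgraph \<Rightarrow> bool" where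
  "realizes P G \<longleftrightarrow> (\<exists>lam. assembly_design G lam \<and> tile_at G lam ` verts G \<subseteq> P)"

definition T1 :: "('v, 'e) mgraph \<Rightarrow> nat" where
  "T1 G = (LEAST k. \<exists>P :: nat tile set. pot P \<and> realizes P G \<and> card P = k)"

definition tube_graph :: "nat \<Rightarrow> nat \<Rightarrow> (nat \<times> nat, (nat \<times> nat) \<times> (nat \<times> nat)) mgraph" where
  "tube_graph m n =
    \<lparr> verts = {(i, j). i < n - 1 \<and> 1 \<le> j \<and> j \<le> m},
      edges = {((i, j), ((i + 1) mod (n - 1), j)) | i j. i < n - 1 \<and> 1 \<le> j \<and> j \<le> m}
            \<union> {((i, j), (i, j + 1)) | i j. i < n - 1 \<and> 1 \<le> j \<and> j < m}
            \<union> {((i, j), ((i + 1) mod (n - 1), j + 1)) | i j. i < n - 1 \<and> 1 \<le> j \<and> j < m},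
      ends = id \<rparr>"

end

theory Submission imports Defs begin

(* The tile used at a vertex is the multiset of labels of its half-edges, so its size is the
   degree of the vertex: a realizing pot needs at least as many tiles as there are distinct
   degrees, and the tube has degree 4 on the boundary rows and 6 on the inner rows.
   Conversely, label the tail of every horizontal and vertical edge a and the tail of every
   diagonal hat a. At each vertex the labels cancel in pairs (outgoing against incoming
   horizontal edge, upward vertical against upward diagonal, downward vertical against downward
   diagonal), so the two tiles {a^2, hat a^2} and {a^3, hat a^3} suffice. *)

definition half_edges_at :: "('v, 'e) mgraph \<Rightarrow> 'v \<Rightarrow> ('e \<times> bool) set" where
  "half_edges_at G v = {h. fst h \<in> edges G \<and> hend G h = v}"

definition degree :: "('v, 'e) mgraph \<Rightarrow> 'v \<Rightarrow> nat" where
  "degree G v = card (half_edges_at G v)"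

lemma size_tile_at: "size (tile_at G lam v) = degree G v"
  by (simp add: tile_at_def degree_def half_edges_at_def)

lemma card_degrees_le_card_pot:
  assumes "finite P" and "realizes P G"
  shows "card (degree G ` verts G) \<le> card P"
proof -
  obtain lam where lam: "tile_at G lam ` verts G \<subseteq> P"
    using assms(2) unfolding realizes_def by blast
  have "degree G ` verts G = size ` tile_at G lam ` verts G"
    by (simp add: image_image size_tile_at)
  also have "\<dots> \<subseteq> size ` P"
    using lam by blast
  finally have "card (degree G ` verts G) \<le> card (size ` P)"
    using assms(1) by (simp add: card_mono)
  also have "\<dots> \<le> card P"
    by (rule card_image_le[OF assms(1)])
  finally show ?thesis .
qed

lemma T1_le_card_pot:
  fixes P :: "nat tile set"
  assumes "pot P" and "realizes P G"
  shows "T1 G \<le> card P"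
  unfolding T1_def using assms by (blast intro: Least_le)

lemma card_degrees_le_T1:
  assumes "\<exists>P :: nat tile set. pot P \<and> realizes P G"
  shows "card (degree G ` verts G) \<le> T1 G"
  unfolding T1_def
proof (rule LeastI2_ex)
  show "\<exists>k P. pot P \<and> realizes P G \<and> card (P :: nat tile set) = k"
    using assms by blast
next
  fix k assume "\<exists>P :: nat tile set. pot P \<and> realizes P G \<and> card P = k"
  then show "card (degree G ` verts G) \<le> k"
    using card_degrees_le_card_pot unfolding pot_def by blast
qed

definition col_succ :: "nat \<Rightarrow> nat \<Rightarrow> nat" where
  "col_succ n i = (i + 1) mod (n - 1)"

definition col_pred :: "nat \<Rightarrow> nat \<Rightarrow> nat" where
  "col_pred n i = (if i = 0 then n - 2 else i - 1)"

lemma col_succ_eq_iff: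
  assumes "n \<ge> 3" "i < n - 1" "i' < n - 1"
  shows "col_succ n i' = i \<longleftrightarrow> i' = col_pred n i"
  using assms by (cases "i' + 1 = n - 1") (auto simp: col_succ_def col_pred_def mod_if)

lemma col_succ_pred:
  assumes "n \<ge> 3" "i < n - 1"
  shows "col_pred n i < n - 1" "col_succ n (col_pred n i) = i"
  using assms col_succ_eq_iff[OF assms] by (auto simp: col_pred_def)

lemma col_succ_neq: "n \<ge> 3 \<Longrightarrow> i < n - 1 \<Longrightarrow> col_succ n i \<noteq> i"
  by (auto simp: col_succ_def mod_if)

lemma col_pred_neq: "n \<ge> 3 \<Longrightarrow> col_pred n i \<noteq> i"
  by (auto simp: col_pred_def)

lemma edges_tube_graph:
  "edges (tube_graph m n) =
     {((i, j), (col_succ n i, j)) | i j. i < n - 1 \<and> 1 \<le> j \<and> j \<le> m}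
   \<union> {((i, j), (i, j + 1)) | i j. i < n - 1 \<and> 1 \<le> j \<and> j < m}
   \<union> {((i, j), (col_succ n i, j + 1)) | i j. i < n - 1 \<and> 1 \<le> j \<and> j < m}"
  by (simp add: tube_graph_def col_succ_def)

lemma verts_tube_graph: "verts (tube_graph m n) = {(i, j). i < n - 1 \<and> 1 \<le> j \<and> j \<le> m}"
  by (simp add: tube_graph_def)

lemma hend_tube_graph: "hend (tube_graph m n) h = (if snd h then snd (fst h) else fst (fst h))"
  by (simp add: hend_def tube_graph_def)

definition tube_star :: "nat \<Rightarrow> nat \<Rightarrow> nat \<Rightarrow> nat \<Rightarrow> (((nat \<times> nat) \<times> nat \<times> nat) \<times> bool) list" where
  "tube_star m n i j =
     [(((i, j), (col_succ n i, j)), False), (((col_pred n i, j), (i, j)), True)]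
   @ (if j < m then [(((i, j), (i, j + 1)), False), (((i, j), (col_succ n i, j + 1)), False)]
      else [])
   @ (if 1 < j then [(((i, j - 1), (i, j)), True), (((col_pred n i, j - 1), (i, j)), True)]
      else [])"

lemma distinct_tube_star: "n \<ge> 3 \<Longrightarrow> i < n - 1 \<Longrightarrow> distinct (tube_star m n i j)"
  using col_succ_neq[of n i] col_pred_neq[of n i] by (auto simp: tube_star_def)

lemma half_edges_at_tube_graph:
  assumes "n \<ge> 3" "i < n - 1" "1 \<le> j" "j \<le> m"
  shows "half_edges_at (tube_graph m n) (i, j) = set (tube_star m n i j)"
proof
  show "half_edges_at (tube_graph m n) (i, j) \<subseteq> set (tube_star m n i j)"
  proof clarify
    fix e b assume "(e, b) \<in> half_edges_at (tube_graph m n) (i, j)"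
    then have e: "e \<in> edges (tube_graph m n)" and at: "(if b then snd e else fst e) = (i, j)"
      by (auto simp: half_edges_at_def hend_tube_graph)
    from e consider
        (horizontal) i' j' where "i' < n - 1" "e = ((i', j'), (col_succ n i', j'))"
      | (vertical) i' j' where "1 \<le> j'" "j' < m" "e = ((i', j'), (i', j' + 1))"
      | (diagonal) i' j'
          where "i' < n - 1" "1 \<le> j'" "j' < m" "e = ((i', j'), (col_succ n i', j' + 1))"
      unfolding edges_tube_graph by blast
    then show "(e, b) \<in> set (tube_star m n i j)"
    proof cases
      case (horizontal i' j')
      show ?thesis
      proof (cases b)
        case True
        with at horizontal have "i' = col_pred n i" "j' = j"
          using col_succ_eq_iff[OF assms(1,2) horizontal(1)] by auto
        with True horizontal show ?thesis
          by (simp add: tube_star_def col_succ_pred[OF assms(1,2)])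
      next
        case False
        with at horizontal show ?thesis by (simp add: tube_star_def)
      qed
    next
      case (vertical i' j')
      with at show ?thesis by (cases b) (auto simp: tube_star_def)
    next
      case (diagonal i' j')
      show ?thesis
      proof (cases b)
        case True
        with at diagonal have "i' = col_pred n i" "j' = j - 1" "1 < j"
          using col_succ_eq_iff[OF assms(1,2) diagonal(1)] by auto
        with True diagonal show ?thesis
          by (simp add: tube_star_def col_succ_pred[OF assms(1,2)])
      next
        case False
        with at diagonal show ?thesis by (simp add: tube_star_def)
      qed
    qed
  qed
  show "set (tube_star m n i j) \<subseteq> half_edges_at (tube_graph m n) (i, j)"
    using assms col_succ_pred[OF assms(1,2)]
    by (auto simp: half_edges_at_def edges_tube_graph hend_tube_graph tube_star_def)
qed

lemma tile_at_tube_graph: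
  assumes "n \<ge> 3" "i < n - 1" "1 \<le> j" "j \<le> m"
  shows "tile_at (tube_graph m n) lam (i, j) = mset (map lam (tube_star m n i j))"
  using half_edges_at_tube_graph[OF assms] distinct_tube_star[OF assms(1,2)]
  by (simp add: tile_at_def half_edges_at_def[symmetric] mset_set_set)

lemma degree_tube_graph:
  assumes "n \<ge> 3" "i < n - 1" "1 \<le> j" "j \<le> m"
  shows "degree (tube_graph m n) (i, j) = 2 + (if j < m then 2 else 0) + (if 1 < j then 2 else 0)"
proof -
  have "degree (tube_graph m n) (i, j) = length (tube_star m n i j)"
    using half_edges_at_tube_graph[OF assms] distinct_tube_star[OF assms(1,2)]
    by (simp add: degree_def distinct_card)
  then show ?thesis
    by (simp add: tube_star_def)
qed

definition balanced_tile :: "nat \<Rightarrow> nat tile" where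
  "balanced_tile k = replicate_mset k (Sym 0) + replicate_mset k (Hat 0)"

lemma size_balanced_tile: "size (balanced_tile k) = 2 * k"
  by (simp add: balanced_tile_def)

lemma inj_balanced_tile: "inj balanced_tile"
  by (rule inj_on_inverseI[of _ "\<lambda>t. size t div 2"]) (simp add: size_balanced_tile)

lemma pot_balanced_tiles:
  assumes "finite K" and "0 \<notin> K"
  shows "pot (balanced_tile ` K)"
  using assms by (fastforce simp: pot_def balanced_tile_def)

definition tube_design :: "((nat \<times> nat) \<times> nat \<times> nat) \<times> bool \<Rightarrow> nat cend" where
  "tube_design h =
     (let ((a, b), (c, d)) = fst h; x = (if a \<noteq> c \<and> b \<noteq> d then Hat 0 else Sym 0)
      in if snd h then hat x else x)"

lemma assembly_design_tube_design: "assembly_design G tube_design"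
  by (auto simp: assembly_design_def tube_design_def Let_def split: prod.splits)

lemma tile_at_tube_design:
  assumes "n \<ge> 3" "i < n - 1" "1 \<le> j" "j \<le> m"
  shows "tile_at (tube_graph m n) tube_design (i, j)
           = balanced_tile (1 + (if j < m then 1 else 0) + (if 1 < j then 1 else 0))"
  using assms col_succ_neq[OF assms(1,2)] col_pred_neq[OF assms(1), of i]
  by (auto simp: tile_at_tube_graph tube_star_def tube_design_def balanced_tile_def
      add_mset_commute)

lemma degree_image_tube_graph:
  assumes "n \<ge> 3" and "m \<ge> 3"
  shows "degree (tube_graph m n) ` verts (tube_graph m n) = {4, 6}"
proof
  show "degree (tube_graph m n) ` verts (tube_graph m n) \<subseteq> {4, 6}"
    using assms by (auto simp: verts_tube_graph degree_tube_graph)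
  have "(0, 1) \<in> verts (tube_graph m n)" "(0, 2) \<in> verts (tube_graph m n)"
    using assms by (simp_all add: verts_tube_graph)
  moreover have "degree (tube_graph m n) (0, 1) = 4" "degree (tube_graph m n) (0, 2) = 6"
    using assms by (simp_all add: degree_tube_graph)
  ultimately show "{4, 6} \<subseteq> degree (tube_graph m n) ` verts (tube_graph m n)"
    by (metis empty_subsetI image_eqI insert_subset)
qed

lemma realizes_tube_graph:
  assumes "n \<ge> 3" and "m \<ge> 2"
  shows "realizes (balanced_tile ` {2, 3}) (tube_graph m n)"
proof -
  have "tile_at (tube_graph m n) tube_design v \<in> balanced_tile ` {2, 3}"
    if vertex: "v \<in> verts (tube_graph m n)" for v
  proof -
    obtain i j where v: "v = (i, j)" "i < n - 1" "1 \<le> j" "j \<le> m"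
      using vertex by (auto simp: verts_tube_graph)
    define k :: nat where "k = 1 + (if j < m then 1 else 0) + (if 1 < j then 1 else 0)"
    have "k \<in> {2, 3}"
      using v assms by (auto simp: k_def)
    moreover have "tile_at (tube_graph m n) tube_design v = balanced_tile k"
      using v assms tile_at_tube_design[of n i j m] by (simp add: k_def)
    ultimately show ?thesis
      by blast
  qed
  then show ?thesis
    unfolding realizes_def using assembly_design_tube_design by blast
qed

theorem proposition8:
  fixes m n :: nat
  assumes "n \<ge> 4" and "m \<ge> 3"
  shows "T1 (tube_graph m n) = 2"
proof -
  let ?P = "balanced_tile ` {2, 3}"
  have pot: "pot ?P"
    by (rule pot_balanced_tiles) simp_all
  have realizes: "realizes ?P (tube_graph m n)"
    using assms by (intro realizes_tube_graph) simp_all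
  have "T1 (tube_graph m n) \<le> card ?P"
    by (rule T1_le_card_pot[OF pot realizes])
  also have "\<dots> = card {2, 3 :: nat}"
    by (rule card_image[OF inj_on_subset[OF inj_balanced_tile subset_UNIV]])
  finally have "T1 (tube_graph m n) \<le> 2"
    by simp
  moreover have "card (degree (tube_graph m n) ` verts (tube_graph m n)) \<le> T1 (tube_graph m n)"
    using pot realizes by (intro card_degrees_le_T1 exI conjI)
  ultimately show ?thesis
    using assms by (simp add: degree_image_tube_graph)
qed

end
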